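(* For every $n\ge1$ and $r\in\mathbb{N}\cup\{0\}$, the only global smooth functions on the moduli spaces of $r$-jets of linear connections (symmetric or not) are the constants: $$\mathcal{C}^\infty(\mathfrak{C}^r_n)=\mathbb{R},\qquad\mathcal{C}^\infty(\widetilde{\mathfrak{C}}^r_n)=\mathbb{R}.$$ Equivalently, every smooth $\mathrm{Diff}_x$-invariant function on $J^r_x\mathcal{C}$ (resp. on $J^r_x\widetilde{\mathcal{C}}$) is constant.
   Context: $X$ is a smooth $n$-manifold, $x\in X$; $J^r_x\mathcal{C}$ (resp. $J^r_x\widetilde{\mathcal{C}}$) is the manifold of $r$-jets at $x$ of linear connections (resp. symmetric linear connections). The group $\mathrm{Diff}_x$ of germs of diffeomorphisms fixing $x$ acts by $(\tau\cdot\nabla)_D\bar D=\tau_*^{-1}(\nabla_{\tau_*D}\tau_*\bar D)$, through the Lie group $\mathrm{Diff}^{r+2}_x$ of $(r+2)$-jets. $\mathfrak{C}^r_n=J^r_x\mathcal{C}/\mathrm{Diff}^{r+2}_x$ and $\widetilde{\mathfrak{C}}^r_n=J^r_x\widetilde{\mathcal{C}}/\mathrm{Diff}^{r+2}_x$ are quotient ringed spaces: a function $h$ on an open $V$ of the quotient is smooth iff $h\circ\pi$ is smooth on $\pi^{-1}(V)$; hence $\mathcal{C}^\infty(\mathfrak{C}^r_n)=\mathcal{C}^\infty(J^r_x\mathcal{C})^{\mathrm{Diff}_x}$. These global smooth functions are called (scalar) differential invariants of order $\le r$. *)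

theory Defs
  imports "HOL-Analysis.Analysis" "HOL-Library.Multiset"
begin

coinductive smooth_on :: "'a::euclidean_space set \<Rightarrow> ('a \<Rightarrow> real) \<Rightarrow> bool"
  for U :: "'a set" where
  "(\<forall>x\<in>U. f differentiable (at x)) \<Longrightarrow>
   (\<forall>b\<in>Basis. smooth_on U (\<lambda>x. frechet_derivative f (at x) b)) \<Longrightarrow>
   smooth_on U f"

definition pd :: "'n::finite \<Rightarrow> (real^'n \<Rightarrow> real) \<Rightarrow> real^'n \<Rightarrow> real" where
  "pd i f x = frechet_derivative f (at x) (axis i 1)"

fun pdl :: "'n::finite list \<Rightarrow> (real^'n \<Rightarrow> real) \<Rightarrow> real^'n \<Rightarrow> real" where
  "pdl [] f = f"
| "pdl (i # is) f = pd i (pdl is f)"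

(* partial derivative d^alpha for a multi-index alpha (a multiset of coordinates) *)
definition pdm :: "'n::finite multiset \<Rightarrow> (real^'n \<Rightarrow> real) \<Rightarrow> real^'n \<Rightarrow> real" where
  "pdm \<alpha> f = pdl (SOME l. mset l = \<alpha>) f"

(* germ at 0 of a linear connection on R^n, given by its Christoffel symbols
   G i j k = Gamma^k_{ij}, i.e. nabla_{d_i} d_j = sum_k Gamma^k_{ij} d_k *)
definition conn_germ :: "('n::finite \<Rightarrow> 'n \<Rightarrow> 'n \<Rightarrow> real^'n \<Rightarrow> real) \<Rightarrow> bool" where
  "conn_germ G \<longleftrightarrow> (\<exists>U. open U \<and> 0 \<in> U \<and> (\<forall>i j k. smooth_on U (G i j k)))"

definition sym_conn_germ :: "('n::finite \<Rightarrow> 'n \<Rightarrow> 'n \<Rightarrow> real^'n \<Rightarrow> real) \<Rightarrow> bool" where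
  "sym_conn_germ G \<longleftrightarrow> conn_germ G \<and> (\<forall>i j k. G i j k = G j i k)"

definition diff_germ :: "(real^'n::finite \<Rightarrow> real^'n) \<Rightarrow> bool" where
  "diff_germ \<phi> \<longleftrightarrow> \<phi> 0 = 0 \<and>
     (\<exists>U \<psi>. open U \<and> 0 \<in> U \<and> open (\<phi> ` U) \<and> (\<forall>x\<in>U. \<psi> (\<phi> x) = x) \<and>
        (\<forall>c. smooth_on U (\<lambda>x. \<phi> x $ c)) \<and> (\<forall>c. smooth_on (\<phi> ` U) (\<lambda>y. \<psi> y $ c)))"

definition jac :: "(real^'n::finite \<Rightarrow> real^'n) \<Rightarrow> real^'n \<Rightarrow> real^'n^'n" where
  "jac \<phi> x = (\<chi> c a. pd a (\<lambda>y. \<phi> y $ c) x)"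

(* Christoffel symbols of tau.nabla, (tau.nabla)_D D' = tau_*^{-1}(nabla_{tau_* D} tau_* D') *)
definition act :: "(real^'n::finite \<Rightarrow> real^'n) \<Rightarrow> ('n \<Rightarrow> 'n \<Rightarrow> 'n \<Rightarrow> real^'n \<Rightarrow> real)
    \<Rightarrow> ('n \<Rightarrow> 'n \<Rightarrow> 'n \<Rightarrow> real^'n \<Rightarrow> real)" where
  "act \<phi> G = (\<lambda>i j k x. \<Sum>c\<in>UNIV. matrix_inv (jac \<phi> x) $ k $ c *
      (pd i (pd j (\<lambda>y. \<phi> y $ c)) x +
       (\<Sum>a\<in>UNIV. \<Sum>b\<in>UNIV. G a b c (\<phi> x) * pd i (\<lambda>y. \<phi> y $ a) x * pd j (\<lambda>y. \<phi> y $ b) x)))"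

(* coordinates of J^r_0 C: (i,j,k,alpha) with |alpha| <= r, value d^alpha Gamma^k_{ij}(0) *)
definition jet_index :: "nat \<Rightarrow> ('n::finite \<times> 'n \<times> 'n \<times> 'n multiset) set" where
  "jet_index r = {(i, j, k, \<alpha>). size \<alpha> \<le> r}"

definition jet_coords :: "('m \<Rightarrow> 'n::finite \<times> 'n \<times> 'n \<times> 'n multiset)
    \<Rightarrow> ('n \<Rightarrow> 'n \<Rightarrow> 'n \<Rightarrow> real^'n \<Rightarrow> real) \<Rightarrow> real^'m::finite" where
  "jet_coords \<sigma> G = (\<chi> m. case \<sigma> m of (i, j, k, \<alpha>) \<Rightarrow> pdm \<alpha> (G i j k) 0)"

(* coordinates of J^r_0 of symmetric connections: unordered lower pair beta = {#i,j#} *)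
definition sym_jet_index :: "nat \<Rightarrow> ('n::finite multiset \<times> 'n \<times> 'n multiset) set" where
  "sym_jet_index r = {(\<beta>, k, \<alpha>). size \<beta> = 2 \<and> size \<alpha> \<le> r}"

definition sym_jet_coords :: "('m \<Rightarrow> 'n::finite multiset \<times> 'n \<times> 'n multiset)
    \<Rightarrow> ('n \<Rightarrow> 'n \<Rightarrow> 'n \<Rightarrow> real^'n \<Rightarrow> real) \<Rightarrow> real^'m::finite" where
  "sym_jet_coords \<sigma> G = (\<chi> m. case \<sigma> m of (\<beta>, k, \<alpha>) \<Rightarrow>
      (let (i, j) = (SOME p. {#fst p, snd p#} = \<beta>) in pdm \<alpha> (G i j k) 0))"

end

theory Submission
  imports Defs
begin

text \<open>The homotheties \<open>x \<mapsto> t x\<close> fix the origin and act on Christoffel symbols by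
  \<open>\<Gamma> \<mapsto> t \<Gamma>(t \<cdot>)\<close>, so they multiply the jet coordinate \<open>\<partial>\<^sup>\<alpha> \<Gamma>\<^sup>k\<^sub>i\<^sub>j(0)\<close> by
  \<open>t\<^bsup>|\<alpha>|+1\<^esup>\<close>. Every jet is the jet of a polynomial connection, so an invariant function
  is invariant under these weighted dilations of jet space. All weights are positive, so letting
  \<open>t \<rightarrow> 0\<close> and using continuity gives \<open>h y = h 0\<close> for every jet \<open>y\<close>.\<close>

definition monom_vec :: "'n::finite multiset \<Rightarrow> real^'n \<Rightarrow> real" where
  "monom_vec \<alpha> x = (\<Prod>c\<in>#\<alpha>. x $ c)"

lemma monom_vec_empty [simp]: "monom_vec {#} x = 1"
  by (simp add: monom_vec_def)

lemma monom_vec_add_mset [simp]: "monom_vec (add_mset c \<alpha>) x = x $ c * monom_vec \<alpha> x"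
  by (simp add: monom_vec_def)

lemma monom_vec_zero: "monom_vec \<alpha> 0 = (if \<alpha> = {#} then 1 else 0)"
  by (induction \<alpha>) auto

lemma monom_vec_scaleR: "monom_vec \<alpha> (t *\<^sub>R x) = t ^ size \<alpha> * monom_vec \<alpha> x"
  by (induction \<alpha>) auto

lemma axis_nth_if: "axis i x $ c = (if c = i then x else 0)"
  by (simp add: axis_def)

lemma monom_vec_has_derivative_partials:
  "\<exists>D. (monom_vec \<alpha> has_derivative D) (at x) \<and>
      (\<forall>i. D (axis i 1) = real (count \<alpha> i) * monom_vec (\<alpha> - {#i#}) x)"
proof (induction \<alpha>)
  case empty
  have const: "monom_vec {#} = (\<lambda>_. 1)"
    by (simp add: fun_eq_iff)
  show ?case
    unfolding const by (intro exI[of _ "\<lambda>_. 0"] conjI has_derivative_const) simp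
next
  case (add c \<alpha>)
  then obtain D where D: "(monom_vec \<alpha> has_derivative D) (at x)"
    "\<And>i. D (axis i 1) = real (count \<alpha> i) * monom_vec (\<alpha> - {#i#}) x" by blast
  have "((\<lambda>x. x $ c) has_derivative (\<lambda>v. v $ c)) (at x)"
    by (rule bounded_linear_imp_has_derivative) (rule bounded_linear_vec_nth)
  from has_derivative_mult[OF this D(1)]
  have "(monom_vec (add_mset c \<alpha>) has_derivative (\<lambda>v. x $ c * D v + v $ c * monom_vec \<alpha> x)) (at x)"
    unfolding monom_vec_add_mset[abs_def] .
  moreover have "x $ c * D (axis i 1) + axis i 1 $ c * monom_vec \<alpha> x =
      real (count (add_mset c \<alpha>) i) * monom_vec (add_mset c \<alpha> - {#i#}) x" for i
  proof (cases "c = i")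
    case True
    show ?thesis
    proof (cases "i \<in># \<alpha>")
      case True
      then have "monom_vec \<alpha> x = x $ i * monom_vec (\<alpha> - {#i#}) x"
        by (metis insert_DiffM monom_vec_add_mset)
      with \<open>c = i\<close> show ?thesis by (simp add: D(2) axis_nth_if algebra_simps)
    next
      case False
      with \<open>c = i\<close> show ?thesis by (simp add: D(2) axis_nth_if not_in_iff)
    qed
  next
    case False
    then have "add_mset c \<alpha> - {#i#} = add_mset c (\<alpha> - {#i#})"
      by (simp add: diff_union_swap2)
    with False show ?thesis by (simp add: D(2) axis_nth_if)
  qed
  ultimately show ?case by blast
qed

lemma monom_vec_has_derivative: "(monom_vec \<alpha> has_derivative frechet_derivative (monom_vec \<alpha>) (at x)) (at x)"
  using monom_vec_has_derivative_partials[of \<alpha> x] frechet_derivative_at by blast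

lemma frechet_derivative_monom_vec_axis:
  "frechet_derivative (monom_vec \<alpha>) (at x) (axis i 1) = real (count \<alpha> i) * monom_vec (\<alpha> - {#i#}) x"
  using monom_vec_has_derivative_partials[of \<alpha> x] frechet_derivative_at by metis

definition poly_fun :: "'a set \<Rightarrow> ('a \<Rightarrow> real) \<Rightarrow> ('a \<Rightarrow> 'n::finite multiset) \<Rightarrow> real^'n \<Rightarrow> real" where
  "poly_fun A c e x = (\<Sum>a\<in>A. c a * monom_vec (e a) x)"

lemma poly_fun_has_derivative: "finite A \<Longrightarrow>
  (poly_fun A c e has_derivative (\<lambda>v. \<Sum>a\<in>A. c a * frechet_derivative (monom_vec (e a)) (at x) v)) (at x)"
  unfolding poly_fun_def by (intro has_derivative_sum has_derivative_mult_right monom_vec_has_derivative)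

lemma frechet_derivative_poly_fun_axis: "finite A \<Longrightarrow>
  frechet_derivative (poly_fun A c e) (at x) (axis i 1)
    = poly_fun A (\<lambda>a. c a * real (count (e a) i)) (\<lambda>a. e a - {#i#}) x"
  using frechet_derivative_at[OF poly_fun_has_derivative[of A c e x]]
  by (metis (no_types, lifting) frechet_derivative_monom_vec_axis poly_fun_def sum.cong mult.assoc)

lemma pd_poly_fun: "finite A \<Longrightarrow>
  pd i (poly_fun A c e) = poly_fun A (\<lambda>a. c a * real (count (e a) i)) (\<lambda>a. e a - {#i#})"
  by (rule ext) (simp add: pd_def frechet_derivative_poly_fun_axis)

lemma poly_fun_smooth:
  assumes "finite A"
  shows "smooth_on UNIV (poly_fun A c e)"
proof (coinduction arbitrary: c e rule: smooth_on.coinduct)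
  case smooth_on
  have "poly_fun A c e differentiable at x" for x
    using poly_fun_has_derivative[OF assms] unfolding differentiable_def by blast
  moreover have "\<exists>c' e'. (\<lambda>x. frechet_derivative (poly_fun A c e) (at x) b) = poly_fun A c' e'"
    if b: "b \<in> Basis" for b
  proof -
    obtain i where "b = axis i 1"
      using b by (auto simp: Basis_vec_def)
    then show ?thesis
      using frechet_derivative_poly_fun_axis[OF assms] by blast
  qed
  ultimately show ?case by blast
qed

fun falling_coeff :: "'n list \<Rightarrow> 'n multiset \<Rightarrow> real" where
  "falling_coeff [] \<gamma> = 1"
| "falling_coeff (i # l) \<gamma> = real (count (\<gamma> - mset l) i) * falling_coeff l \<gamma>"

lemma falling_coeff_nonzero_iff: "falling_coeff l \<gamma> \<noteq> 0 \<longleftrightarrow> mset l \<subseteq># \<gamma>"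
proof (induction l)
  case (Cons i l)
  have "(count (\<gamma> - mset l) i \<noteq> 0 \<and> mset l \<subseteq># \<gamma>) \<longleftrightarrow> add_mset i (mset l) \<subseteq># \<gamma>"
  proof
    assume "count (\<gamma> - mset l) i \<noteq> 0 \<and> mset l \<subseteq># \<gamma>"
    then have "count (add_mset i (mset l)) a \<le> count \<gamma> a" for a
      unfolding subseteq_mset_def by (cases "a = i") auto
    then show "add_mset i (mset l) \<subseteq># \<gamma>"
      by (simp add: subseteq_mset_def)
  next
    assume *: "add_mset i (mset l) \<subseteq># \<gamma>"
    then have "count (add_mset i (mset l)) i \<le> count \<gamma> i"
      by (rule mset_subset_eq_count)
    moreover have "mset l \<subseteq># \<gamma>"
      using * by (meson mset_subset_eq_insertD subset_mset.less_imp_le)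
    ultimately show "count (\<gamma> - mset l) i \<noteq> 0 \<and> mset l \<subseteq># \<gamma>"
      by simp
  qed
  with Cons show ?case by auto
qed simp

lemma pdl_poly_fun: "finite A \<Longrightarrow>
   pdl l (poly_fun A c e) = poly_fun A (\<lambda>a. c a * falling_coeff l (e a)) (\<lambda>a. e a - mset l)"
proof (induction l)
  case (Cons i l)
  then show ?case
    by (simp add: pd_poly_fun) (simp add: poly_fun_def fun_eq_iff mult_ac)
qed simp

lemma pdl_poly_fun_at_0: "finite A \<Longrightarrow>
   pdl l (poly_fun A c e) 0 = (\<Sum>a\<in>A. if e a = mset l then c a * falling_coeff l (e a) else 0)"
  unfolding pdl_poly_fun poly_fun_def
proof (rule sum.cong[OF refl])
  fix a
  show "c a * falling_coeff l (e a) * monom_vec (e a - mset l) 0 =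
        (if e a = mset l then c a * falling_coeff l (e a) else 0)"
  proof (cases "mset l \<subseteq># e a")
    case True
    then have "e a - mset l = {#} \<longleftrightarrow> e a = mset l"
      by (metis Diff_eq_empty_iff_mset subset_mset.dual_order.antisym)
    then show ?thesis by (simp add: monom_vec_zero)
  next
    case False
    then show ?thesis using falling_coeff_nonzero_iff by auto
  qed
qed

text \<open>The value of \<open>\<partial>\<^sup>\<beta> x\<^sup>\<beta>\<close>, namely \<open>\<beta>!\<close>; only its being nonzero matters.\<close>
definition monom_deriv_coeff :: "'n multiset \<Rightarrow> real" where
  "monom_deriv_coeff \<beta> = falling_coeff (SOME l. mset l = \<beta>) \<beta>"

lemma mset_some_list: "mset (SOME l. mset l = \<beta>) = \<beta>"
  by (metis (mono_tags) ex_mset someI_ex)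

lemma monom_deriv_coeff_nonzero: "monom_deriv_coeff \<beta> \<noteq> 0"
  unfolding monom_deriv_coeff_def falling_coeff_nonzero_iff mset_some_list by simp

lemma pdm_poly_fun_at_0: "finite A \<Longrightarrow>
   pdm \<beta> (poly_fun A c e) 0 = monom_deriv_coeff \<beta> * (\<Sum>a\<in>A. if e a = \<beta> then c a else 0)"
  unfolding pdm_def pdl_poly_fun_at_0 mset_some_list monom_deriv_coeff_def sum_distrib_left
  by (intro sum.cong) auto

lemma scaleR_nth_eq_poly_fun: "(\<lambda>x::real^'n::finite. (t *\<^sub>R x) $ c) = poly_fun {()} (\<lambda>_. t) (\<lambda>_. {#c#})"
  by (simp add: poly_fun_def fun_eq_iff monom_vec_def)

lemma pd_scaleR_nth: "pd a (\<lambda>x::real^'n::finite. (t *\<^sub>R x) $ c) = (\<lambda>_. if c = a then t else 0)"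
  unfolding scaleR_nth_eq_poly_fun pd_poly_fun[OF finite] by (simp add: poly_fun_def fun_eq_iff)

lemma jac_scaleR: "jac (\<lambda>x::real^'n::finite. t *\<^sub>R x) x = mat t"
  unfolding jac_def pd_scaleR_nth by (simp add: mat_def)

lemma pd_const: "pd i (\<lambda>_. c) x = 0"
  unfolding pd_def using frechet_derivative_at[OF has_derivative_const] by metis

lemma smooth_on_scaleR_nth: "smooth_on UNIV (\<lambda>x::real^'n::finite. (t *\<^sub>R x) $ c)"
  unfolding scaleR_nth_eq_poly_fun by (simp add: poly_fun_smooth)

lemma diff_germ_scaleR:
  assumes "t \<noteq> 0"
  shows "diff_germ (\<lambda>x::real^'n::finite. t *\<^sub>R x)"
proof -
  have "range (\<lambda>x::real^'n. t *\<^sub>R x) = UNIV"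
    using assms by (intro surjI[of _ "\<lambda>y. inverse t *\<^sub>R y"]) simp
  moreover have "\<forall>x. inverse t *\<^sub>R t *\<^sub>R (x::real^'n) = x"
    using assms by simp
  ultimately show ?thesis
    unfolding diff_germ_def using smooth_on_scaleR_nth
    by (intro conjI exI[of _ UNIV] exI[of _ "\<lambda>y. inverse t *\<^sub>R y"]) auto
qed

lemma mat_mult_mat: "(mat a :: real^'n::finite^'n) ** mat b = mat (a * b)"
proof -
  have "((*\<^sub>R) a \<circ> (*\<^sub>R) b) = ((*\<^sub>R) (a * b) :: real^'n \<Rightarrow> real^'n)"
    by (simp add: fun_eq_iff)
  then show ?thesis
    by (metis matrix_compose linear_scaleR matrix_scaleR)
qed

lemma matrix_inv_eqI:
  fixes A B :: "real^'n::finite^'n"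
  assumes "A ** B = mat 1" "B ** A = mat 1"
  shows "matrix_inv A = B"
proof -
  have inv: "matrix_inv A ** A = mat 1"
    unfolding matrix_inv_def using someI[of "\<lambda>A'. A ** A' = mat 1 \<and> A' ** A = mat 1"] assms by blast
  have "matrix_inv A = matrix_inv A ** (A ** B)"
    by (simp add: assms(1))
  also have "\<dots> = B"
    by (simp add: matrix_mul_assoc inv)
  finally show ?thesis .
qed

lemma matrix_inv_mat: "t \<noteq> 0 \<Longrightarrow> matrix_inv (mat t :: real^'n::finite^'n) = mat (inverse t)"
  by (rule matrix_inv_eqI) (simp_all add: mat_mult_mat)

lemma mult_if_zero_left: "(if P then a else 0) * (b::'a::mult_zero) = (if P then a * b else 0)"
  by simp

lemma mult_if_zero_right: "(a::'a::mult_zero) * (if P then b else 0) = (if P then a * b else 0)"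
  by simp

lemma act_scaleR:
  assumes "t \<noteq> 0"
  shows "act (\<lambda>x::real^'n::finite. t *\<^sub>R x) G = (\<lambda>i j k x. t * G i j k (t *\<^sub>R x))"
proof (intro ext)
  fix i j k and x :: "real^'n"
  have "act (\<lambda>x. t *\<^sub>R x) G i j k x =
      (\<Sum>c\<in>UNIV. (if k = c then inverse t else 0) *
         (\<Sum>a\<in>UNIV. \<Sum>b\<in>UNIV. G a b c (t *\<^sub>R x) * (if a = i then t else 0) * (if b = j then t else 0)))"
    unfolding act_def jac_scaleR matrix_inv_mat[OF assms] pd_scaleR_nth pd_const
    by (simp only: mat_def vec_lambda_beta add_0_left)
  also have "\<dots> = t * G i j k (t *\<^sub>R x)"
    using assms by (simp add: mult_if_zero_left mult_if_zero_right)
  finally show "act (\<lambda>x. t *\<^sub>R x) G i j k x = t * G i j k (t *\<^sub>R x)" .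
qed

definition weighted_dilation :: "('m::finite \<Rightarrow> nat) \<Rightarrow> real \<Rightarrow> real^'m \<Rightarrow> real^'m" where
  "weighted_dilation w t y = (\<chi> m. t ^ w m * y $ m)"

text \<open>A polynomial connection with prescribed jet \<open>y\<close> at the origin: \<open>P m i j k\<close> says that
  coordinate \<open>m\<close> of jet space is a derivative of \<open>\<Gamma>\<^sup>k\<^sub>i\<^sub>j\<close>, of multi-index \<open>e m\<close>.\<close>
definition jet_realizer :: "('m::finite \<Rightarrow> 'n::finite \<Rightarrow> 'n \<Rightarrow> 'n \<Rightarrow> bool) \<Rightarrow> ('m \<Rightarrow> 'n multiset)
    \<Rightarrow> real^'m \<Rightarrow> ('n \<Rightarrow> 'n \<Rightarrow> 'n \<Rightarrow> real^'n \<Rightarrow> real)" where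
  "jet_realizer P e y i j k =
     poly_fun UNIV (\<lambda>m. if P m i j k then y $ m / monom_deriv_coeff (e m) else 0) e"

lemma conn_germ_jet_realizer: "conn_germ (jet_realizer P e y)"
  unfolding conn_germ_def jet_realizer_def by (intro exI[of _ UNIV]) (simp add: poly_fun_smooth)

lemma sym_conn_germ_jet_realizer:
  "(\<And>m i j k. P m i j k = P m j i k) \<Longrightarrow> sym_conn_germ (jet_realizer P e y)"
  unfolding sym_conn_germ_def by (simp add: conn_germ_jet_realizer jet_realizer_def fun_eq_iff)

lemma pdm_jet_realizer_at_0:
  "pdm \<beta> (jet_realizer P e y i j k) 0 = (\<Sum>m\<in>UNIV. if P m i j k \<and> e m = \<beta> then y $ m else 0)"
  unfolding jet_realizer_def pdm_poly_fun_at_0[OF finite] sum_distrib_left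
  using monom_deriv_coeff_nonzero by (intro sum.cong) auto

lemma act_scaleR_jet_realizer:
  "t \<noteq> 0 \<Longrightarrow> act (\<lambda>x. t *\<^sub>R x) (jet_realizer P e y)
     = jet_realizer P e (weighted_dilation (\<lambda>m. Suc (size (e m))) t y)"
  unfolding act_scaleR jet_realizer_def weighted_dilation_def poly_fun_def
  by (intro ext) (auto simp: sum_distrib_left monom_vec_scaleR intro!: sum.cong)

lemma jet_coords_jet_realizer:
  assumes "inj \<sigma>"
  shows "jet_coords \<sigma> (jet_realizer (\<lambda>m i j k. \<exists>\<alpha>. \<sigma> m = (i, j, k, \<alpha>)) (\<lambda>m. snd (snd (snd (\<sigma> m)))) y) = y"
proof -
  have "pdm \<alpha> (jet_realizer (\<lambda>m i j k. \<exists>\<alpha>. \<sigma> m = (i, j, k, \<alpha>)) (\<lambda>m. snd (snd (snd (\<sigma> m)))) y i j k) 0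
      = y $ m" if m: "\<sigma> m = (i, j, k, \<alpha>)" for m i j k \<alpha>
  proof -
    have "(\<exists>\<alpha>'. \<sigma> m' = (i, j, k, \<alpha>')) \<and> snd (snd (snd (\<sigma> m'))) = \<alpha> \<longleftrightarrow> m' = m" for m'
      using m inj_eq[OF assms, of m' m] by auto
    then show ?thesis
      unfolding pdm_jet_realizer_at_0 by simp
  qed
  then show ?thesis
    by (simp add: jet_coords_def vec_eq_iff split: prod.split)
qed

lemma size_mset_eq_2_obtain:
  assumes "size \<beta> = 2"
  obtains a b where "\<beta> = {#a, b#}"
proof -
  obtain a \<gamma> where "\<beta> = add_mset a \<gamma>" "size \<gamma> = Suc 0"
    using assms size_eq_Suc_imp_eq_union[of \<beta> 1] by auto
  moreover obtain b where "\<gamma> = {#b#}"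
    using \<open>size \<gamma> = Suc 0\<close> size_eq_Suc_imp_eq_union[of \<gamma> 0] by auto
  ultimately show ?thesis
    using that by blast
qed

lemma sym_jet_coords_jet_realizer:
  assumes "inj \<sigma>" and "range \<sigma> \<subseteq> sym_jet_index r"
  shows "sym_jet_coords \<sigma> (jet_realizer (\<lambda>m i j k. \<exists>\<alpha>. \<sigma> m = ({#i, j#}, k, \<alpha>)) (\<lambda>m. snd (snd (\<sigma> m))) y) = y"
proof -
  have "(let (i, j) = (SOME p. {#fst p, snd p#} = \<beta>) in
          pdm \<alpha> (jet_realizer (\<lambda>m i j k. \<exists>\<alpha>. \<sigma> m = ({#i, j#}, k, \<alpha>)) (\<lambda>m. snd (snd (\<sigma> m))) y i j k) 0)
      = y $ m" if m: "\<sigma> m = (\<beta>, k, \<alpha>)" for m \<beta> k \<alpha>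
  proof -
    have "\<sigma> m \<in> sym_jet_index r"
      using assms(2) by blast
    then have "size \<beta> = 2"
      using m by (simp add: sym_jet_index_def)
    then obtain a b where "\<beta> = {#a, b#}"
      by (rule size_mset_eq_2_obtain)
    then have "\<exists>p. {#fst p, snd p#} = \<beta>"
      by (metis fst_conv snd_conv)
    then obtain i j where ij: "(SOME p. {#fst p, snd p#} = \<beta>) = (i, j)" "{#i, j#} = \<beta>"
      by (metis (mono_tags, lifting) prod.collapse someI_ex)
    have "(\<exists>\<alpha>'. \<sigma> m' = ({#i, j#}, k, \<alpha>')) \<and> snd (snd (\<sigma> m')) = \<alpha> \<longleftrightarrow> m' = m" for m'
      using m ij(2) inj_eq[OF assms(1), of m' m] by auto
    then show ?thesis
      unfolding ij(1) pdm_jet_realizer_at_0 by simp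
  qed
  then show ?thesis
    by (simp add: sym_jet_coords_def vec_eq_iff split: prod.split)
qed

lemma smooth_on_imp_isCont: "smooth_on U f \<Longrightarrow> x \<in> U \<Longrightarrow> isCont f x"
  by (auto elim: smooth_on.cases intro: differentiable_imp_continuous_within)

lemma weighted_dilation_invariant_eq_at_0:
  fixes h :: "real^'m::finite \<Rightarrow> real"
  assumes "isCont h 0" and "\<And>m. 0 < w m"
    and "\<And>t. 0 < t \<Longrightarrow> h (weighted_dilation w t y) = h y"
  shows "h y = h 0"
proof -
  have "((\<lambda>t. weighted_dilation w t y) \<longlongrightarrow> weighted_dilation w 0 y) (at_right 0)"
    unfolding weighted_dilation_def by (intro tendsto_intros)
  moreover have "weighted_dilation w 0 y = 0"
    using assms(2) by (simp add: weighted_dilation_def vec_eq_iff)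
  ultimately have "((\<lambda>t. h (weighted_dilation w t y)) \<longlongrightarrow> h 0) (at_right 0)"
    using isCont_tendsto_compose[OF assms(1)] by auto
  moreover have "\<forall>\<^sub>F t in at_right 0. h (weighted_dilation w t y) = h y"
    using eventually_at_right_less[of 0] by eventually_elim (use assms(3) in auto)
  ultimately have "((\<lambda>_. h y) \<longlongrightarrow> h 0) (at_right (0::real))"
    by (rule Lim_transform_eventually)
  then show ?thesis
    by (simp add: tendsto_const_iff)
qed

lemma constant_if_jets_realized_by_dilations:
  fixes h :: "real^'m::finite \<Rightarrow> real"
    and coords :: "('n::finite \<Rightarrow> 'n \<Rightarrow> 'n \<Rightarrow> real^'n \<Rightarrow> real) \<Rightarrow> real^'m"
  assumes "smooth_on UNIV h"
    and invariant: "\<And>t G. t \<noteq> 0 \<Longrightarrow> G \<in> range R \<Longrightarrow>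
                          h (coords (act (\<lambda>x. t *\<^sub>R x) G)) = h (coords G)"
    and realized: "\<And>y. coords (R y) = y"
    and dilated: "\<And>t y. t \<noteq> 0 \<Longrightarrow> act (\<lambda>x. t *\<^sub>R x) (R y) = R (weighted_dilation w t y)"
    and "\<And>m. 0 < w m"
  shows "\<exists>c. \<forall>y. h y = c"
proof -
  have "h y = h 0" for y
  proof (rule weighted_dilation_invariant_eq_at_0[of h w])
    show "isCont h 0"
      using assms(1) by (rule smooth_on_imp_isCont) simp
    show "h (weighted_dilation w t y) = h y" if "0 < t" for t
      using invariant[of t "R y"] that by (simp add: realized dilated)
  qed (use assms(5) in auto)
  then show ?thesis
    by blast
qed

theorem mainTheorem9:
  fixes r :: nat
  shows "(\<forall>(\<sigma> :: 'm::finite \<Rightarrow> 'n::finite \<times> 'n \<times> 'n \<times> 'n multiset) (h :: real^'m \<Rightarrow> real).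
            bij_betw \<sigma> UNIV (jet_index r) \<and> smooth_on UNIV h \<and>
            (\<forall>\<phi> G. diff_germ \<phi> \<and> conn_germ G \<longrightarrow>
                h (jet_coords \<sigma> (act \<phi> G)) = h (jet_coords \<sigma> G))
            \<longrightarrow> (\<exists>c. \<forall>y. h y = c))
       \<and> (\<forall>(\<sigma> :: 'p::finite \<Rightarrow> 'n multiset \<times> 'n \<times> 'n multiset) (h :: real^'p \<Rightarrow> real).
            bij_betw \<sigma> UNIV (sym_jet_index r) \<and> smooth_on UNIV h \<and>
            (\<forall>\<phi> G. diff_germ \<phi> \<and> sym_conn_germ G \<longrightarrow>
                h (sym_jet_coords \<sigma> (act \<phi> G)) = h (sym_jet_coords \<sigma> G))
            \<longrightarrow> (\<exists>c. \<forall>y. h y = c))"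
proof (intro conjI allI impI; elim conjE)
  fix \<sigma> :: "'m \<Rightarrow> 'n \<times> 'n \<times> 'n \<times> 'n multiset" and h :: "real^'m \<Rightarrow> real"
  assume \<sigma>: "bij_betw \<sigma> UNIV (jet_index r)" and "smooth_on UNIV h"
    and invariant: "\<forall>\<phi> G. diff_germ \<phi> \<and> conn_germ G \<longrightarrow> h (jet_coords \<sigma> (act \<phi> G)) = h (jet_coords \<sigma> G)"
  let ?R = "jet_realizer (\<lambda>m i j k. \<exists>\<alpha>. \<sigma> m = (i, j, k, \<alpha>)) (\<lambda>m. snd (snd (snd (\<sigma> m))))"
  show "\<exists>c. \<forall>y. h y = c"
  proof (rule constant_if_jets_realized_by_dilations[where R = ?R])
    show "h (jet_coords \<sigma> (act (\<lambda>x. t *\<^sub>R x) G)) = h (jet_coords \<sigma> G)" if "t \<noteq> 0" "G \<in> range ?R" for t G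
      using invariant that diff_germ_scaleR conn_germ_jet_realizer by blast
    show "jet_coords \<sigma> (?R y) = y" for y
      using \<sigma> by (simp add: bij_betw_def jet_coords_jet_realizer)
  qed (use \<open>smooth_on UNIV h\<close> act_scaleR_jet_realizer in auto)
next
  fix \<sigma> :: "'p \<Rightarrow> 'n multiset \<times> 'n \<times> 'n multiset" and h :: "real^'p \<Rightarrow> real"
  assume \<sigma>: "bij_betw \<sigma> UNIV (sym_jet_index r)" and "smooth_on UNIV h"
    and invariant: "\<forall>\<phi> G. diff_germ \<phi> \<and> sym_conn_germ G \<longrightarrow>
                      h (sym_jet_coords \<sigma> (act \<phi> G)) = h (sym_jet_coords \<sigma> G)"
  let ?R = "jet_realizer (\<lambda>m i j k. \<exists>\<alpha>. \<sigma> m = ({#i, j#}, k, \<alpha>)) (\<lambda>m. snd (snd (\<sigma> m)))"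
  show "\<exists>c. \<forall>y. h y = c"
  proof (rule constant_if_jets_realized_by_dilations[where R = ?R])
    have "sym_conn_germ (?R y)" for y
      by (rule sym_conn_germ_jet_realizer) (simp add: add_mset_commute)
    then show "h (sym_jet_coords \<sigma> (act (\<lambda>x. t *\<^sub>R x) G)) = h (sym_jet_coords \<sigma> G)"
      if "t \<noteq> 0" "G \<in> range ?R" for t G
      using invariant that diff_germ_scaleR by blast
    show "sym_jet_coords \<sigma> (?R y) = y" for y
      using \<sigma> unfolding bij_betw_def by (intro sym_jet_coords_jet_realizer) auto
  qed (use \<open>smooth_on UNIV h\<close> act_scaleR_jet_realizer in auto)
qed

end
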